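(* Let $M$ and $M'$ be two stable matchings in an instance $I$ of SPA-S, and let $s$ be a student assigned in $M$ to a project $p_j$ offered by lecturer $l_k$. If $s$ prefers $M$ to $M'$, and either $s\in M'(l_k)$ or $l_k$ prefers $s$ to at least one student in $M'(l_k)$, then $p_j$ is full in $M'$.
   Context: An instance $I$ of SPA-S consists of a finite set $\mathcal{S}$ of students, a finite set $\mathcal{P}$ of projects and a finite set $\mathcal{L}$ of lecturers. Each student $s_i$ ranks a subset $A_i\subseteq\mathcal{P}$ (its acceptable projects) in strict order. Each project is offered by exactly one lecturer; lecturer $l_k$ offers a nonempty set $P_k\subseteq\mathcal{P}$, the $P_k$ partitioning $\mathcal{P}$. Each lecturer $l_k$ ranks in strict order the students who find at least one project of $P_k$ acceptable. Projects have capacities $c_j\in\mathbb{Z}^+$, lecturers have capacities $d_k\in\mathbb{Z}^+$ with $\max\{c_j:p_j\in P_k\}\le d_k\le\sum\{c_j:p_j\in P_k\}$. A pair $(s_i,p_j)$, $p_j$ offered by $l_k$, is acceptable if $p_j\in A_i$ and $s_i$ is on $l_k$'s list. A matching $M$ is a set of acceptable pairs with each student in at most one pair, $|M(p_j)|\le c_j$, $|M(l_k)|\le d_k$, where $M(s_i)$, $M(p_j)$, $M(l_k)$ denote the project of $s_i$, the students assigned to $p_j$, and the students assigned to projects of $l_k$. Undersubscribed/full means fewer than/exactly capacity many assigned students. An acceptable pair $(s_i,p_j)\notin M$ ($p_j$ offered by $l_k$) blocks $M$ if ($s_i$ is unassigned or prefers $p_j$ to $M(s_i)$) and one of: (P1)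 $p_j$ and $l_k$ undersubscribed; (P2) $p_j$ undersubscribed, $l_k$ full, $s_i\in M(l_k)$; (P3) $p_j$ undersubscribed, $l_k$ full, $l_k$ prefers $s_i$ to the worst student of $M(l_k)$; (P4) $p_j$ full and $l_k$ prefers $s_i$ to the worst student of $M(p_j)$. $M$ is stable if it has no blocking pair. A student $s$ prefers $M$ to $M'$ if $s$ is assigned in both and prefers $M(s)$ to $M'(s)$. *)

theory Defs
  imports Main
begin

text \<open>An SPA-S instance. Student preferences are given as lists of acceptable
projects (most preferred first); lecturer preferences as lists of students.\<close>

record ('s, 'p, 'l) spa =
  students  :: "'s set"
  projects  :: "'p set"
  lecturers :: "'l set"
  sprefs    :: "'s \<Rightarrow> 'p list"
  lprefs    :: "'l \<Rightarrow> 's list"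
  lect      :: "'p \<Rightarrow> 'l"
  pcap      :: "'p \<Rightarrow> nat"
  lcap      :: "'l \<Rightarrow> nat"

definition prefers :: "'a list \<Rightarrow> 'a \<Rightarrow> 'a \<Rightarrow> bool" where
  "prefers xs x y \<longleftrightarrow> (\<exists>i j. i < j \<and> j < length xs \<and> xs ! i = x \<and> xs ! j = y)"

definition valid_spa :: "('s, 'p, 'l) spa \<Rightarrow> bool" where
  "valid_spa I \<longleftrightarrow>
     finite (students I) \<and> finite (projects I) \<and> finite (lecturers I) \<and>
     (\<forall>s\<in>students I. distinct (sprefs I s) \<and> set (sprefs I s) \<subseteq> projects I) \<and>
     (\<forall>p\<in>projects I. lect I p \<in> lecturers I) \<and>
     (\<forall>l\<in>lecturers I. \<exists>p\<in>projects I. lect I p = l) \<and>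
     (\<forall>l\<in>lecturers I. distinct (lprefs I l) \<and>
        set (lprefs I l) = {s\<in>students I. \<exists>p\<in>set (sprefs I s). lect I p = l}) \<and>
     (\<forall>p\<in>projects I. 0 < pcap I p) \<and>
     (\<forall>l\<in>lecturers I. 0 < lcap I l) \<and>
     (\<forall>p\<in>projects I. pcap I p \<le> lcap I (lect I p)) \<and>
     (\<forall>l\<in>lecturers I. lcap I l \<le> sum (pcap I) {p\<in>projects I. lect I p = l})"

definition acceptable :: "('s, 'p, 'l) spa \<Rightarrow> 's \<Rightarrow> 'p \<Rightarrow> bool" where
  "acceptable I s p \<longleftrightarrow> s \<in> students I \<and> p \<in> set (sprefs I s) \<and> s \<in> set (lprefs I (lect I p))"

definition Mproj :: "('s \<times> 'p) set \<Rightarrow> 'p \<Rightarrow> 's set" where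
  "Mproj M p = {s. (s, p) \<in> M}"

definition Mlect :: "('s, 'p, 'l) spa \<Rightarrow> ('s \<times> 'p) set \<Rightarrow> 'l \<Rightarrow> 's set" where
  "Mlect I M l = {s. \<exists>p. (s, p) \<in> M \<and> lect I p = l}"

definition matching :: "('s, 'p, 'l) spa \<Rightarrow> ('s \<times> 'p) set \<Rightarrow> bool" where
  "matching I M \<longleftrightarrow>
     (\<forall>(s, p)\<in>M. acceptable I s p) \<and>
     (\<forall>s p p'. (s, p) \<in> M \<longrightarrow> (s, p') \<in> M \<longrightarrow> p = p') \<and>
     (\<forall>p\<in>projects I. card (Mproj M p) \<le> pcap I p) \<and>
     (\<forall>l\<in>lecturers I. card (Mlect I M l) \<le> lcap I l)"

definition prefers_to_worst :: "('s, 'p, 'l) spa \<Rightarrow> 'l \<Rightarrow> 's \<Rightarrow> 's set \<Rightarrow> bool" where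
  "prefers_to_worst I l s T \<longleftrightarrow>
     (\<exists>w\<in>T. (\<forall>x\<in>T. x = w \<or> prefers (lprefs I l) x w) \<and> prefers (lprefs I l) s w)"

definition blocking :: "('s, 'p, 'l) spa \<Rightarrow> ('s \<times> 'p) set \<Rightarrow> 's \<Rightarrow> 'p \<Rightarrow> bool" where
  "blocking I M s p \<longleftrightarrow>
     (let l = lect I p in
      acceptable I s p \<and> (s, p) \<notin> M \<and>
      ((\<nexists>q. (s, q) \<in> M) \<or> (\<exists>q. (s, q) \<in> M \<and> prefers (sprefs I s) p q)) \<and>
      ((card (Mproj M p) < pcap I p \<and> card (Mlect I M l) < lcap I l) \<or>
       (card (Mproj M p) < pcap I p \<and> card (Mlect I M l) = lcap I l \<and> s \<in> Mlect I M l) \<or>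
       (card (Mproj M p) < pcap I p \<and> card (Mlect I M l) = lcap I l \<and>
          prefers_to_worst I l s (Mlect I M l)) \<or>
       (card (Mproj M p) = pcap I p \<and> prefers_to_worst I l s (Mproj M p))))"

definition stable :: "('s, 'p, 'l) spa \<Rightarrow> ('s \<times> 'p) set \<Rightarrow> bool" where
  "stable I M \<longleftrightarrow> matching I M \<and> (\<forall>s p. \<not> blocking I M s p)"

end

theory Submission
  imports Defs
begin

(* If p_j were undersubscribed in M', then (s, p_j) would block M': s prefers p_j to its
   project in M', and the hypothesis on l_k gives (P1) when l_k is undersubscribed and
   (P2) or (P3) when l_k is full. *)

lemma prefers_nthI:
  assumes "i < j" "j < length xs"
  shows "prefers xs (xs ! i) (xs ! j)"
  using assms unfolding prefers_def by blast

(* The worst student of T is the one at the last position of the list holding a member of T. *)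
lemma prefers_to_worst_if_prefers_member:
  assumes "T \<subseteq> set (lprefs I l)" "t \<in> T" "prefers (lprefs I l) s t"
  shows "prefers_to_worst I l s T"
proof -
  let ?xs = "lprefs I l"
  define J where "J = {j. j < length ?xs \<and> ?xs ! j \<in> T}"
  have pos_in_J: "\<exists>j\<in>J. ?xs ! j = x" if x: "x \<in> T" for x
  proof -
    obtain j where "j < length ?xs" "?xs ! j = x"
      using x assms(1) by (meson in_set_conv_nth subsetD)
    then show ?thesis using x unfolding J_def by auto
  qed
  have "finite J" unfolding J_def by auto
  moreover have "J \<noteq> {}" using pos_in_J assms(2) by blast
  ultimately have last_in_J: "Max J \<in> J" and le_last: "\<And>j. j \<in> J \<Longrightarrow> j \<le> Max J"
    by auto
  define w where "w = ?xs ! Max J"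
  have w: "Max J < length ?xs" "w \<in> T" using last_in_J unfolding J_def w_def by auto
  have "x = w \<or> prefers ?xs x w" if "x \<in> T" for x
  proof -
    obtain i where i: "i \<in> J" "?xs ! i = x" using pos_in_J \<open>x \<in> T\<close> by blast
    show ?thesis
    proof (cases "i = Max J")
      case False
      then have "i < Max J" using le_last[OF i(1)] by simp
      then have "prefers ?xs x w"
        using prefers_nthI w(1) unfolding w_def i(2)[symmetric] by blast
      then show ?thesis ..
    qed (use i(2) w_def in simp)
  qed
  moreover have "prefers ?xs s w"
  proof -
    obtain i j where ij: "i < j" "j < length ?xs" "?xs ! i = s" "?xs ! j = t"
      using assms(3) unfolding prefers_def by auto
    then have "j \<le> Max J" using le_last assms(2) unfolding J_def by auto
    then show ?thesis
      using prefers_nthI[of i "Max J"] ij w(1) unfolding w_def by force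
  qed
  ultimately show ?thesis unfolding prefers_to_worst_def using w(2) by blast
qed

lemma prefers_imp_neq:
  assumes "distinct xs" "prefers xs x y"
  shows "x \<noteq> y"
  using assms unfolding prefers_def by (auto simp: nth_eq_iff_index_eq)

lemma matching_Mlect_subset_lprefs:
  assumes "matching I M"
  shows "Mlect I M l \<subseteq> set (lprefs I l)"
  using assms unfolding matching_def Mlect_def acceptable_def by fastforce

lemma blocking_if_project_undersubscribed:
  assumes "matching I M" and "lect I p \<in> lecturers I"
    and "acceptable I s p" and "(s, p) \<notin> M"
    and "\<exists>q. (s, q) \<in> M \<and> prefers (sprefs I s) p q"
    and "card (Mproj M p) < pcap I p"
    and "s \<in> Mlect I M (lect I p) \<or>
         (\<exists>t\<in>Mlect I M (lect I p). prefers (lprefs I (lect I p)) s t)"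
  shows "blocking I M s p"
proof -
  let ?l = "lect I p"
  have "card (Mlect I M ?l) \<le> lcap I ?l"
    using assms(1,2) unfolding matching_def by auto
  moreover have "prefers_to_worst I ?l s (Mlect I M ?l)" if not_in_Ml: "s \<notin> Mlect I M ?l"
  proof -
    obtain t where "t \<in> Mlect I M ?l" "prefers (lprefs I ?l) s t"
      using not_in_Ml assms(7) by blast
    then show ?thesis
      by (rule prefers_to_worst_if_prefers_member[OF matching_Mlect_subset_lprefs[OF assms(1)]])
  qed
  ultimately have "card (Mlect I M ?l) < lcap I ?l \<or>
      (card (Mlect I M ?l) = lcap I ?l \<and> s \<in> Mlect I M ?l) \<or>
      (card (Mlect I M ?l) = lcap I ?l \<and> prefers_to_worst I ?l s (Mlect I M ?l))"
    by linarith
  with assms(3-6) show ?thesis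
    unfolding blocking_def Let_def by auto
qed

theorem proposition2:
  fixes I :: "('s, 'p, 'l) spa" and M M' :: "('s \<times> 'p) set"
  assumes "valid_spa I"
    and "stable I M" and "stable I M'"
    and "(s, pj) \<in> M"
    and "\<exists>q. (s, q) \<in> M' \<and> prefers (sprefs I s) pj q"
    and "s \<in> Mlect I M' (lect I pj) \<or>
         (\<exists>t\<in>Mlect I M' (lect I pj). prefers (lprefs I (lect I pj)) s t)"
  shows "card (Mproj M' pj) = pcap I pj"
proof -
  have M': "matching I M'" "\<forall>s p. \<not> blocking I M' s p"
    using assms(3) unfolding stable_def by auto
  have acc: "acceptable I s pj"
    using assms(2,4) unfolding stable_def matching_def by auto
  then have pj: "pj \<in> projects I" "lect I pj \<in> lecturers I"
    and dist: "distinct (sprefs I s)"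
    using assms(1) unfolding acceptable_def valid_spa_def by auto
  obtain q where q: "(s, q) \<in> M'" "prefers (sprefs I s) pj q" using assms(5) by blast
  have "(s, pj) \<notin> M'"
    using prefers_imp_neq[OF dist q(2)] q(1) M'(1) unfolding matching_def by blast
  then have "\<not> card (Mproj M' pj) < pcap I pj"
    using blocking_if_project_undersubscribed[OF M'(1) pj(2) acc _ assms(5) _ assms(6)] M'(2)
    by blast
  moreover have "card (Mproj M' pj) \<le> pcap I pj"
    using M'(1) pj(1) unfolding matching_def by blast
  ultimately show ?thesis by linarith
qed

end
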